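(* Let $(g,f)$ be an impartial deterministic strong sample mechanism on $\mathcal{G}^1_n$. Then the sample set is independent of the nomination profile: there is a set $S$ such that $g(\mathbf{x})=S$ for all $\mathbf{x}\in\mathcal{G}^1_n$.
   Context: $N=\{1,\dots,n\}$. $\mathcal{G}^1_n$ is the set of directed graphs on $N$ without self-loops in which every vertex has out-degree exactly $1$; a profile $\mathbf{x}$ is a tuple with $x_u\in N\setminus\{u\}$ the vertex nominated by $u$, and $(x'_u,\mathbf{x}_{-u})$ denotes the profile where $u$'s vote is changed to $x'_u$. For $S\subseteq N$, $W_S(\mathbf{x})=\{w\in N\setminus S:\ (v,w)\text{ is an edge for some } v\in S\}$. A sample mechanism $(g,f)$ first selects a sample set $g(\mathbf{x})$ using a function $g:\mathcal{G}^1_n\to 2^N\setminus\{\emptyset\}$ and then applies a (possibly randomized) selection rule $f$ whose range is restricted to $W_{g(\mathbf{x})}(\mathbf{x})$ (no winner if this set is empty). The sample mechanism is called deterministic if $g$ uses no randomization (and randomized if $g$ selects $S$ randomly). It is a strong sample mechanism if $g(x'_u,\mathbf{x}_{-u})=g(\mathbf{x})$ for all $\mathbf{x}$, all $u\in g(\mathbf{x})$ and all $x'_u\in N\setminus\{u\}$. The mechanism is impartial if for every profile $\mathbf{x}$, every vertex $u$ and every $x'_u\in N\setminus\{u\}$, the probability that $u$ is selected as winner is the same under $\mathbf{x}$ and $(x'_u,\mathbf{x}_{-u})$. *)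

theory Defs
  imports "HOL-Probability.Probability_Mass_Function" "HOL-Library.FuncSet"
begin

definition voters :: "nat \<Rightarrow> nat set" where
  "voters n = {1..n}"

definition profiles :: "nat \<Rightarrow> (nat \<Rightarrow> nat) set" where
  "profiles n = (\<Pi>\<^sub>E u\<in>voters n. voters n - {u})"

definition W_set :: "nat \<Rightarrow> nat set \<Rightarrow> (nat \<Rightarrow> nat) \<Rightarrow> nat set" where
  "W_set n S x = {w \<in> voters n - S. \<exists>v\<in>S. x v = w}"

text \<open>A (possibly randomized) sample mechanism (g,f): g deterministic, f x is a distribution
  over winners (None = no winner), supported on W_{g x}(x), and no winner iff that set is empty.\<close>
definition sample_mechanism ::
  "nat \<Rightarrow> ((nat \<Rightarrow> nat) \<Rightarrow> nat set) \<Rightarrow> ((nat \<Rightarrow> nat) \<Rightarrow> nat option pmf) \<Rightarrow> bool" where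
  "sample_mechanism n g f \<longleftrightarrow>
     (\<forall>x\<in>profiles n. g x \<noteq> {} \<and> g x \<subseteq> voters n \<and>
        (if W_set n (g x) x = {} then f x = return_pmf None
         else set_pmf (f x) \<subseteq> Some ` W_set n (g x) x))"

definition strong_sample :: "nat \<Rightarrow> ((nat \<Rightarrow> nat) \<Rightarrow> nat set) \<Rightarrow> bool" where
  "strong_sample n g \<longleftrightarrow>
     (\<forall>x\<in>profiles n. \<forall>u\<in>g x. \<forall>v\<in>voters n - {u}. g (x(u := v)) = g x)"

definition impartial :: "nat \<Rightarrow> ((nat \<Rightarrow> nat) \<Rightarrow> nat option pmf) \<Rightarrow> bool" where
  "impartial n f \<longleftrightarrow>
     (\<forall>x\<in>profiles n. \<forall>u\<in>voters n. \<forall>v\<in>voters n - {u}.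
        pmf (f x) (Some u) = pmf (f (x(u := v))) (Some u))"

end

(*
  Impartiality is used only once: if v is the only vertex nominated from the sample, v wins
  with probability one, so v still wins, and hence is still nominated from the new sample,
  after changing its own vote.  Letting the sample members nominate each other, except for
  one member s who nominates v, this forces some member of the new sample to nominate v.
  Varying s, and using that the sample of a strong mechanism is determined by the votes of
  its non-members, one finds that a non-member nominated by no other non-member can change
  its vote without changing the sample.

  Let S be the sample of a profile in which every vertex reaches S along nominations (a
  Hamiltonian cycle).  Redirecting the vertices into S one at a time, always one at maximal
  distance from S, shows that every profile in which all vertices reach S has sample S.  The
  other profiles are handled by induction on the number of vertices that never reach S: if v
  is one of them and the sample is not S, one builds a profile in which v is the unique
  candidate and which, after v votes into S, has fewer such vertices, hence sample S, while
  no member of S nominates v.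
*)

theory Submission
  imports Defs
begin

lemma profilesD:
  assumes "x \<in> profiles n" and "u \<in> voters n"
  shows "x u \<in> voters n" and "x u \<noteq> u"
  using assms unfolding profiles_def by auto

lemma profiles_undefined: "x \<in> profiles n \<Longrightarrow> u \<notin> voters n \<Longrightarrow> x u = undefined"
  unfolding profiles_def by auto

lemma profilesI:
  assumes "\<And>u. u \<in> voters n \<Longrightarrow> x u \<in> voters n \<and> x u \<noteq> u"
    and "\<And>u. u \<notin> voters n \<Longrightarrow> x u = undefined"
  shows "x \<in> profiles n"
  using assms unfolding profiles_def by auto

lemma profiles_update:
  "x \<in> profiles n \<Longrightarrow> u \<in> voters n \<Longrightarrow> v \<in> voters n \<Longrightarrow> v \<noteq> u \<Longrightarrow> x(u := v) \<in> profiles n"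
  by (rule profilesI) (auto dest: profilesD profiles_undefined)

lemma profiles_override_on:
  assumes "x \<in> profiles n" and "A \<subseteq> voters n"
    and "\<And>u. u \<in> A \<Longrightarrow> y u \<in> voters n \<and> y u \<noteq> u"
  shows "override_on x y A \<in> profiles n"
  using assms by (intro profilesI) (auto simp: override_on_def dest: profilesD profiles_undefined)

lemma profiles_mix: "x \<in> profiles n \<Longrightarrow> y \<in> profiles n \<Longrightarrow> override_on x y A \<in> profiles n"
  by (intro profilesI) (auto simp: override_on_def dest: profilesD profiles_undefined)

lemma profiles_trivial: "x \<in> profiles n \<Longrightarrow> n < 2 \<Longrightarrow> x = (\<lambda>_. undefined)"
  by (auto simp: profiles_def voters_def less_2_cases_iff)

definition rotation :: "nat \<Rightarrow> nat \<Rightarrow> nat" where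
  "rotation n u = (if u \<in> voters n then u mod n + 1 else undefined)"

lemma rotation_profile: "2 \<le> n \<Longrightarrow> rotation n \<in> profiles n"
proof (intro profilesI)
  fix u assume "2 \<le> n" and "u \<in> voters n"
  then show "rotation n u \<in> voters n \<and> rotation n u \<noteq> u"
    by (cases "u = n") (auto simp: rotation_def voters_def)
qed (simp add: rotation_def)

lemma funpow_rotation: "v \<in> voters n \<Longrightarrow> (rotation n ^^ k) v = (v + k - 1) mod n + 1"
proof (induction k)
  case (Suc k)
  have "(v + k - 1) mod n + 1 \<in> voters n"
    using Suc.prems by (auto simp: voters_def Suc_le_eq)
  moreover have "Suc ((v + k - 1) mod n) mod n = (v + k) mod n"
    using Suc.prems by (simp add: mod_Suc_eq voters_def)
  ultimately show ?case
    using Suc by (simp add: rotation_def)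
qed (auto simp: voters_def)

lemma funpow_rotation_hits:
  assumes "v \<in> voters n" and "s \<in> voters n"
  shows "(rotation n ^^ (s + n - v)) v = s"
proof -
  have "v + (s + n - v) - 1 = (s - 1) + n"
    using assms by (auto simp: voters_def)
  then show ?thesis
    using assms by (simp add: funpow_rotation) (auto simp: voters_def)
qed

definition reaches :: "(nat \<Rightarrow> nat) \<Rightarrow> nat set \<Rightarrow> nat \<Rightarrow> bool" where
  "reaches x S v \<longleftrightarrow> (\<exists>k. (x ^^ k) v \<in> S)"

lemma reaches_self: "v \<in> S \<Longrightarrow> reaches x S v"
  unfolding reaches_def by (metis funpow_0)

lemma reaches_step: "reaches x S (x v) \<Longrightarrow> reaches x S v"
  unfolding reaches_def by (metis funpow_Suc_right comp_apply)

lemma reaches_transfer: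
  assumes agree: "\<And>u. u \<notin> X \<Longrightarrow> y u = x u" and X: "\<And>u. u \<in> X \<Longrightarrow> reaches y S u"
    and "reaches x S v"
  shows "reaches y S v"
proof -
  obtain k where "(x ^^ k) v \<in> S"
    using \<open>reaches x S v\<close> unfolding reaches_def by blast
  then show ?thesis
  proof (induction k arbitrary: v)
    case 0
    then show ?case by (simp add: reaches_self)
  next
    case (Suc k)
    show ?case
    proof (cases "v \<in> X")
      case False
      with Suc show ?thesis
        by (metis agree funpow_Suc_right comp_apply reaches_step)
    qed (rule X)
  qed
qed

lemma reaches_update: "s \<in> S \<Longrightarrow> reaches (x(v := s)) S v"
  by (rule reaches_step) (simp add: reaches_self)

lemma reaches_through:
  assumes "x v \<in> S" and "\<And>u. u \<in> X \<Longrightarrow> u \<notin> S \<Longrightarrow> u \<noteq> v \<Longrightarrow> x u = v" and "u \<in> insert v X"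
  shows "reaches x S u"
  using assms by (metis insert_iff reaches_self reaches_step)

definition dist_to :: "(nat \<Rightarrow> nat) \<Rightarrow> nat set \<Rightarrow> nat \<Rightarrow> nat" where
  "dist_to x S v = (LEAST k. (x ^^ k) v \<in> S)"

lemma dist_to_step:
  assumes "reaches x S v" and "v \<notin> S"
  shows "dist_to x S v = Suc (dist_to x S (x v))"
proof -
  obtain k where "(x ^^ k) v \<in> S"
    using assms(1) unfolding reaches_def by blast
  then have "(LEAST k. (x ^^ k) v \<in> S) = Suc (LEAST k. (x ^^ Suc k) v \<in> S)"
    by (rule Least_Suc) (use assms(2) in simp)
  then show ?thesis
    unfolding dist_to_def by (simp only: funpow_Suc_right comp_apply)
qed

lemma ex_unnominated:
  assumes "finite D" and "D \<noteq> {}" and "\<And>v. v \<in> D \<Longrightarrow> reaches x S v \<and> v \<notin> S"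
  shows "\<exists>v\<in>D. \<forall>w\<in>D. x w \<noteq> v"
proof -
  obtain v where v: "v \<in> D" "dist_to x S v = Max (dist_to x S ` D)"
    using Max_in[of "dist_to x S ` D"] assms(1,2) by fastforce
  have "x w \<noteq> v" if "w \<in> D" for w
  proof
    assume "x w = v"
    then have "dist_to x S w = Suc (dist_to x S v)"
      using dist_to_step assms(3) \<open>w \<in> D\<close> by blast
    moreover have "dist_to x S w \<le> dist_to x S v"
      using v assms(1) \<open>w \<in> D\<close> by simp
    ultimately show False by simp
  qed
  with v(1) show ?thesis by blast
qed

definition cut_off :: "nat \<Rightarrow> (nat \<Rightarrow> nat) \<Rightarrow> nat set \<Rightarrow> nat set" where
  "cut_off n x S = {v \<in> voters n. \<not> reaches x S v}"

lemma finite_cut_off: "finite (cut_off n x S)"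
  unfolding cut_off_def voters_def by simp

lemma cut_off_disjoint: "v \<in> cut_off n x S \<Longrightarrow> v \<notin> S"
  unfolding cut_off_def using reaches_self by blast

lemma cut_off_closed: "x \<in> profiles n \<Longrightarrow> v \<in> cut_off n x S \<Longrightarrow> x v \<in> cut_off n x S"
  using profilesD reaches_step unfolding cut_off_def by blast

lemma cut_off_transfer:
  assumes "\<And>u. u \<notin> X \<Longrightarrow> y u = x u" and "\<And>u. u \<in> X \<Longrightarrow> reaches y S u"
  shows "cut_off n y S \<subseteq> cut_off n x S"
  unfolding cut_off_def using reaches_transfer[OF assms] by blast

lemma card_cut_off_less:
  assumes "\<And>u. u \<notin> X \<Longrightarrow> y u = x u" and "\<And>u. u \<in> X \<Longrightarrow> reaches y S u"
    and "v \<in> X" and "v \<in> cut_off n x S"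
  shows "card (cut_off n y S) < card (cut_off n x S)"
proof (rule psubset_card_mono[OF finite_cut_off])
  show "cut_off n y S \<subset> cut_off n x S"
    using cut_off_transfer[OF assms(1,2)] assms(2-4) unfolding cut_off_def by blast
qed

lemma cut_off_eq:
  assumes "\<And>u. u \<notin> S \<Longrightarrow> y u = x u"
  shows "cut_off n y S = cut_off n x S"
  using cut_off_transfer[of S y x] cut_off_transfer[of S x y] assms reaches_self
  by (metis subset_antisym)

definition other_member :: "nat set \<Rightarrow> nat \<Rightarrow> nat" where
  "other_member S u = (SOME w. w \<in> S \<and> w \<noteq> u)"

lemma other_member: "s \<in> S \<Longrightarrow> s \<noteq> u \<Longrightarrow> other_member S u \<in> S \<and> other_member S u \<noteq> u"
  unfolding other_member_def by (rule someI) blast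

definition funnel :: "nat set \<Rightarrow> nat \<Rightarrow> nat \<Rightarrow> (nat \<Rightarrow> nat) \<Rightarrow> nat \<Rightarrow> nat" where
  "funnel S s v x = override_on x (\<lambda>u. if u = s then v else other_member S u) S"

lemma funnel_outside [simp]: "u \<notin> S \<Longrightarrow> funnel S s v x u = x u"
  by (simp add: funnel_def)

lemma funnel_profile:
  assumes "x \<in> profiles n" and "S \<subseteq> voters n" and "s \<in> S" and "v \<in> voters n" and "v \<notin> S"
  shows "funnel S s v x \<in> profiles n"
  unfolding funnel_def using assms other_member[OF \<open>s \<in> S\<close>]
  by (intro profiles_override_on) auto

lemma funnel_inside: "u \<in> S \<Longrightarrow> s \<in> S \<Longrightarrow> funnel S s v x u \<in> insert v S"
  using other_member[of s S u] by (auto simp: funnel_def)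

lemma funnel_nominator:
  assumes "funnel S s v x u = v" and "s \<in> S" and "v \<notin> S"
  shows "u = s \<or> (u \<notin> S \<and> x u = v)"
  using assms other_member[OF \<open>s \<in> S\<close>, of u]
  by (auto simp: funnel_def override_on_def split: if_splits)

lemma W_set_funnel:
  assumes "s \<in> S" and "v \<in> voters n" and "v \<notin> S"
  shows "W_set n S (funnel S s v x) = {v}"
proof -
  have "funnel S s v x u \<in> S" if "u \<in> S" and "u \<noteq> s" for u
    using that other_member[OF assms(1)] by (simp add: funnel_def)
  moreover have "funnel S s v x s = v"
    using assms(1) by (simp add: funnel_def)
  ultimately show ?thesis
    using assms unfolding W_set_def by blast
qed

locale strong_sampling =
  fixes n :: nat and g :: "(nat \<Rightarrow> nat) \<Rightarrow> nat set"
  assumes strong_sample: "strong_sample n g"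
    and sample_voters: "x \<in> profiles n \<Longrightarrow> g x \<subseteq> voters n"
begin

lemma sample_update:
  "x \<in> profiles n \<Longrightarrow> u \<in> g x \<Longrightarrow> v \<in> voters n \<Longrightarrow> v \<noteq> u \<Longrightarrow> g (x(u := v)) = g x"
  using strong_sample unfolding strong_sample_def by blast

lemma sample_determined_outside:
  assumes x: "x \<in> profiles n" and y: "y \<in> profiles n" and agree: "\<And>u. u \<notin> g x \<Longrightarrow> y u = x u"
  shows "g y = g x"
proof -
  have "g y = g x"
    if "finite D" and "D \<subseteq> g x" and "y \<in> profiles n" and "\<And>u. u \<notin> D \<Longrightarrow> y u = x u" for D y
    using that
  proof (induction D arbitrary: y rule: finite_induct)
    case empty
    then have "y = x" by auto
    then show ?case by simp
  next
    case (insert u D)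
    have u: "u \<in> voters n"
      using insert.prems(1) sample_voters[OF x] by blast
    define y' where "y' = y(u := x u)"
    have y': "y' \<in> profiles n"
      unfolding y'_def using insert.prems(2) u profilesD[OF x u] by (rule profiles_update)
    have "\<And>w. w \<notin> D \<Longrightarrow> y' w = x w"
      using insert.prems(3) by (simp add: y'_def)
    then have "g y' = g x"
      using insert.IH y' insert.prems(1) by blast
    then have "g (y'(u := y u)) = g x"
      using sample_update[OF y'] insert.prems(1) profilesD[OF insert.prems(2) u] by simp
    moreover have "y'(u := y u) = y"
      by (simp add: y'_def)
    ultimately show ?case by simp
  qed
  moreover have "finite (g x)"
    using sample_voters[OF x] finite_subset unfolding voters_def by blast
  ultimately show ?thesis
    using y agree by blast
qed

lemma sample_eq_if_agree_outside:
  assumes x: "x \<in> profiles n" and y: "y \<in> profiles n"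
    and agree: "\<And>u. u \<notin> g x \<Longrightarrow> u \<notin> g y \<Longrightarrow> x u = y u"
  shows "g x = g y"
proof -
  define h where "h = override_on x y (g x - g y)"
  have h: "h \<in> profiles n"
    unfolding h_def using x y by (rule profiles_mix)
  have "g h = g x"
    by (rule sample_determined_outside[OF x h]) (simp add: h_def)
  moreover have "g h = g y"
    by (rule sample_determined_outside[OF y h]) (auto simp: h_def override_on_def agree)
  ultimately show ?thesis by simp
qed

lemma samples_cover:
  assumes own: "\<And>s. s \<in> S \<Longrightarrow> y s \<in> profiles n \<and> s \<in> g (y s)"
    and agree: "\<And>s s' u. s \<in> S \<Longrightarrow> s' \<in> S \<Longrightarrow> u \<noteq> s \<Longrightarrow> u \<noteq> s' \<Longrightarrow> y s u = y s' u"
    and "s \<in> S"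
  shows "S \<subseteq> g (y s)"
proof
  fix s' assume "s' \<in> S"
  have "g (y s') = g (y s)"
  proof (rule sample_eq_if_agree_outside)
    fix u assume "u \<notin> g (y s')" and "u \<notin> g (y s)"
    then have "u \<noteq> s'" and "u \<noteq> s"
      using own \<open>s \<in> S\<close> \<open>s' \<in> S\<close> by auto
    then show "y s' u = y s u"
      using agree \<open>s \<in> S\<close> \<open>s' \<in> S\<close> by blast
  qed (use own \<open>s \<in> S\<close> \<open>s' \<in> S\<close> in blast)+
  then show "s' \<in> g (y s)"
    using own \<open>s' \<in> S\<close> by blast
qed

end

locale impartial_strong_sample_mechanism =
  fixes n :: nat and g :: "(nat \<Rightarrow> nat) \<Rightarrow> nat set" and f :: "(nat \<Rightarrow> nat) \<Rightarrow> nat option pmf"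
  assumes mechanism: "sample_mechanism n g f"
    and strong: "strong_sample n g"
    and impartial: "impartial n f"
begin

sublocale strong_sampling n g
  using strong mechanism unfolding sample_mechanism_def by unfold_locales blast+

lemma sample_nonempty: "x \<in> profiles n \<Longrightarrow> g x \<noteq> {}"
  using mechanism unfolding sample_mechanism_def by blast

lemma winner_distribution:
  "x \<in> profiles n \<Longrightarrow> if W_set n (g x) x = {} then f x = return_pmf None
     else set_pmf (f x) \<subseteq> Some ` W_set n (g x) x"
  using mechanism unfolding sample_mechanism_def by blast

lemma winner_in_W_set: "x \<in> profiles n \<Longrightarrow> Some w \<in> set_pmf (f x) \<Longrightarrow> w \<in> W_set n (g x) x"
  using winner_distribution[of x] by (auto split: if_splits)

lemma pmf_update_voter:
  "x \<in> profiles n \<Longrightarrow> u \<in> voters n \<Longrightarrow> c \<in> voters n \<Longrightarrow> c \<noteq> u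
    \<Longrightarrow> pmf (f (x(u := c))) (Some u) = pmf (f x) (Some u)"
  using impartial unfolding impartial_def by simp

lemma unique_candidate_stays_candidate:
  assumes x: "x \<in> profiles n" and W: "W_set n (g x) x = {v}" and c: "c \<in> voters n" "c \<noteq> v"
  shows "v \<in> W_set n (g (x(v := c))) (x(v := c))"
proof -
  have v: "v \<in> voters n"
    using W unfolding W_set_def by blast
  have "set_pmf (f x) \<subseteq> {Some v}"
    using winner_distribution[OF x] W by simp
  then have "pmf (f x) (Some v) = 1"
    by (simp add: set_pmf_subset_singleton)
  then have "pmf (f (x(v := c))) (Some v) \<noteq> 0"
    using pmf_update_voter[OF x v c] by simp
  then show ?thesis
    using winner_in_W_set[OF profiles_update[OF x v c]] by (simp add: set_pmf_iff)
qed

lemma funnel_revote: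
  assumes x: "x \<in> profiles n" and gx: "g x = S" and v: "v \<in> voters n" "v \<notin> S"
    and c: "c \<in> voters n" "c \<noteq> v" and s: "s \<in> S"
  shows "(funnel S s v x)(v := c) \<in> profiles n"
    and "v \<in> W_set n (g ((funnel S s v x)(v := c))) ((funnel S s v x)(v := c))"
proof -
  have y: "funnel S s v x \<in> profiles n"
    using funnel_profile[OF x _ s v] sample_voters[OF x] gx by blast
  show "(funnel S s v x)(v := c) \<in> profiles n"
    using y v(1) c by (rule profiles_update)
  have "g (funnel S s v x) = S"
    using sample_determined_outside[OF x y] gx by simp
  then have "W_set n (g (funnel S s v x)) (funnel S s v x) = {v}"
    using W_set_funnel[OF s v] by simp
  then show "v \<in> W_set n (g ((funnel S s v x)(v := c))) ((funnel S s v x)(v := c))"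
    by (rule unique_candidate_stays_candidate[OF y _ c])
qed

lemma funnel_revote_cover:
  assumes x: "x \<in> profiles n" and gx: "g x = S" and v: "v \<in> voters n" "v \<notin> S"
    and c: "c \<in> voters n" "c \<noteq> v" and s0: "s0 \<in> S"
    and nominator: "\<And>s u. s \<in> S \<Longrightarrow> u \<in> g ((funnel S s v x)(v := c)) \<Longrightarrow> funnel S s v x u = v
      \<Longrightarrow> u = s"
  shows "S \<subseteq> g ((funnel S s0 v x)(v := c))"
proof -
  define y where "y s = (funnel S s v x)(v := c)" for s
  have y: "y s \<in> profiles n" and W: "v \<in> W_set n (g (y s)) (y s)" if "s \<in> S" for s
    using funnel_revote[OF x gx v c that] unfolding y_def by blast+
  have own: "s \<in> g (y s)" if s: "s \<in> S" for s
  proof -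
    obtain u where u: "u \<in> g (y s)" "y s u = v"
      using W[OF s] unfolding W_set_def by blast
    then have "funnel S s v x u = v"
      using c(2) by (auto simp: y_def split: if_splits)
    with u(1) show ?thesis
      using nominator[OF s] unfolding y_def by blast
  qed
  have "S \<subseteq> g (y s0)"
    by (rule samples_cover[where y = y]) (use y own s0 in \<open>auto simp: y_def funnel_def override_on_def\<close>)
  then show ?thesis
    by (simp add: y_def)
qed

lemma sample_grows_on_unnominated_revote:
  assumes x: "x \<in> profiles n" and gx: "g x = S" and v: "v \<in> voters n" "v \<notin> S"
    and unnominated: "\<And>w. w \<in> voters n \<Longrightarrow> w \<notin> S \<Longrightarrow> x w \<noteq> v"
    and c: "c \<in> voters n" "c \<noteq> v"
  shows "S \<subseteq> g (x(v := c))" and "v \<notin> g (x(v := c))"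
proof -
  obtain s0 where s0: "s0 \<in> S"
    using sample_nonempty[OF x] gx by blast
  let ?y = "(funnel S s0 v x)(v := c)"
  have y: "?y \<in> profiles n" and W: "v \<in> W_set n (g ?y) ?y"
    using funnel_revote[OF x gx v c s0] by blast+
  have cover: "S \<subseteq> g ?y"
  proof (rule funnel_revote_cover[OF x gx v c s0])
    fix s u assume "s \<in> S" and u: "u \<in> g ((funnel S s v x)(v := c))" "funnel S s v x u = v"
    then have "u \<in> voters n"
      using sample_voters funnel_revote(1)[OF x gx v c \<open>s \<in> S\<close>] by blast
    then show "u = s"
      using funnel_nominator[OF u(2) \<open>s \<in> S\<close> v(2)] unnominated by blast
  qed
  have "g (x(v := c)) = g ?y"
  proof (rule sample_determined_outside[OF y profiles_update[OF x v(1) c]])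
    fix u assume "u \<notin> g ?y"
    then have "u \<notin> S"
      using cover by blast
    then show "(x(v := c)) u = ?y u"
      by simp
  qed
  then show "S \<subseteq> g (x(v := c))" and "v \<notin> g (x(v := c))"
    using cover W unfolding W_set_def by auto
qed

lemma sample_stable_on_unnominated_revote:
  assumes x: "x \<in> profiles n" and x': "x' \<in> profiles n" and agree: "\<And>u. u \<noteq> v \<Longrightarrow> x' u = x u"
    and gx: "g x = S" and v: "v \<in> voters n" "v \<notin> S"
    and unnominated: "\<And>w. w \<in> voters n \<Longrightarrow> w \<notin> S \<Longrightarrow> x w \<noteq> v"
  shows "g x' = S"
proof -
  have x'_eq: "x' = x(v := x' v)" and x_eq: "x = x'(v := x v)"
    using agree by auto
  have "S \<subseteq> g x'" and v': "v \<notin> g x'"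
    using sample_grows_on_unnominated_revote[OF x gx v unnominated profilesD[OF x' v(1)]]
    by (simp_all flip: x'_eq)
  moreover have "g x' \<subseteq> S"
  proof -
    have "x' w \<noteq> v" if "w \<in> voters n" "w \<notin> g x'" for w
    proof (cases "w = v")
      case False
      then show ?thesis
        using that unnominated agree \<open>S \<subseteq> g x'\<close> by (metis subsetD)
    qed (use profilesD(2)[OF x' v(1)] in simp)
    then show ?thesis
      using sample_grows_on_unnominated_revote(1)[OF x' refl v(1) v' _ profilesD[OF x v(1)]] gx
      by (simp flip: x_eq)
  qed
  ultimately show ?thesis by blast
qed

lemma sample_redirect_vertex:
  assumes x: "x \<in> profiles n" and S: "S \<subseteq> voters n" and s0: "s0 \<in> S"
    and reach: "\<And>v. v \<in> voters n \<Longrightarrow> reaches x S v"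
    and D: "{u \<in> voters n - S. x u \<noteq> s0} \<noteq> {}"
  obtains v where "v \<in> {u \<in> voters n - S. x u \<noteq> s0}" and "g (x(v := s0)) = S \<longleftrightarrow> g x = S"
proof -
  let ?D = "{u \<in> voters n - S. x u \<noteq> s0}"
  have "\<exists>v\<in>?D. \<forall>w\<in>?D. x w \<noteq> v"
    using reach D by (intro ex_unnominated) (auto simp: voters_def)
  then obtain v where v: "v \<in> ?D" and v_max: "\<And>w. w \<in> ?D \<Longrightarrow> x w \<noteq> v"
    by blast
  have vN: "v \<in> voters n" "v \<notin> S"
    using v by auto
  have unnominated: "x w \<noteq> v" if "w \<in> voters n" "w \<notin> S" for w
    using that v_max[of w] vN(2) s0 by auto
  have unnominated': "(x(v := s0)) w \<noteq> v" if "w \<in> voters n" "w \<notin> S" for w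
    using unnominated[OF that] vN s0 by auto
  have x': "x(v := s0) \<in> profiles n"
    using x vN(1) by (rule profiles_update) (use S s0 vN in auto)
  have "g (x(v := s0)) = S \<longleftrightarrow> g x = S"
  proof
    show "g x = S" if "g (x(v := s0)) = S"
      by (rule sample_stable_on_unnominated_revote[OF x' x _ that vN unnominated']) simp
    show "g (x(v := s0)) = S" if "g x = S"
      by (rule sample_stable_on_unnominated_revote[OF x x' _ that vN unnominated]) simp
  qed
  with v show thesis
    by (rule that)
qed

lemma sample_redirect_iff:
  assumes x: "x \<in> profiles n" and S: "S \<subseteq> voters n" and s0: "s0 \<in> S"
    and reach: "\<And>v. v \<in> voters n \<Longrightarrow> reaches x S v"
  shows "g (override_on x (\<lambda>_. s0) (voters n - S)) = S \<longleftrightarrow> g x = S"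
proof -
  obtain k where "card {u \<in> voters n - S. x u \<noteq> s0} = k"
    by simp
  then show ?thesis
    using x reach
  proof (induction k arbitrary: x)
    case 0
    then have "{u \<in> voters n - S. x u \<noteq> s0} = {}"
      by (simp add: voters_def)
    then have "override_on x (\<lambda>_. s0) (voters n - S) = x"
      unfolding override_on_def by fastforce
    then show ?case by simp
  next
    case (Suc k)
    let ?D = "{u \<in> voters n - S. x u \<noteq> s0}"
    have "?D \<noteq> {}"
      using Suc.prems(1) by (metis card.empty Zero_not_Suc)
    then obtain v where v: "v \<in> ?D" and iff: "g (x(v := s0)) = S \<longleftrightarrow> g x = S"
      using sample_redirect_vertex[OF Suc.prems(2) S s0 Suc.prems(3)] by blast
    have x': "x(v := s0) \<in> profiles n"
      using Suc.prems(2) by (rule profiles_update) (use S s0 v in auto)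
    have reach': "reaches (x(v := s0)) S u" if "u \<in> voters n" for u
      by (rule reaches_transfer[of "{v}"]) (use Suc.prems(3) that s0 in \<open>auto simp: reaches_update\<close>)
    have "{u \<in> voters n - S. (x(v := s0)) u \<noteq> s0} = ?D - {v}"
      by auto
    then have "card {u \<in> voters n - S. (x(v := s0)) u \<noteq> s0} = k"
      using Suc.prems(1) v by (simp add: voters_def)
    then have "g (override_on (x(v := s0)) (\<lambda>_. s0) (voters n - S)) = S \<longleftrightarrow> g (x(v := s0)) = S"
      using x' reach' by (rule Suc.IH)
    moreover have "override_on (x(v := s0)) (\<lambda>_. s0) (voters n - S) = override_on x (\<lambda>_. s0) (voters n - S)"
      using v by (auto simp: override_on_def)
    ultimately show ?case
      using iff by simp
  qed
qed

lemma sample_eq_if_cut_off_in_sample: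
  assumes z: "z \<in> profiles n" and S: "S \<subseteq> voters n" and s0: "s0 \<in> S" and v: "v \<in> cut_off n z S" "v \<in> g z"
    and IH: "\<And>y. y \<in> profiles n \<Longrightarrow> card (cut_off n y S) < card (cut_off n z S) \<Longrightarrow> g y = S"
  shows "g z = S"
proof -
  have "v \<in> voters n" "s0 \<in> voters n" "s0 \<noteq> v"
    using v S s0 cut_off_disjoint[OF v(1)] unfolding cut_off_def by auto
  then have z': "z(v := s0) \<in> profiles n" and "g (z(v := s0)) = g z"
    using profiles_update[OF z] sample_update[OF z v(2)] by simp_all
  moreover have "card (cut_off n (z(v := s0)) S) < card (cut_off n z S)"
    by (rule card_cut_off_less[of "{v}"]) (use v(1) s0 in \<open>auto simp: reaches_update\<close>)
  then have "g (z(v := s0)) = S"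
    by (rule IH[OF z'])
  ultimately show ?thesis
    by simp
qed

lemma sample_subset_if_cut_off_unnominated:
  assumes z: "z \<in> profiles n" and S: "S \<subseteq> voters n" and s0: "s0 \<in> S"
    and v: "v \<in> cut_off n z S" and unnominated: "\<And>w. w \<in> S - g z \<Longrightarrow> z w \<noteq> v"
    and IH: "\<And>y. y \<in> profiles n \<Longrightarrow> card (cut_off n y S) < card (cut_off n z S) \<Longrightarrow> g y = S"
  shows "g z \<subseteq> S"
proof (rule ccontr)
  assume "\<not> g z \<subseteq> S"
  then obtain c1 where c1: "c1 \<in> g z" "c1 \<notin> S"
    by blast
  then have v_notin: "v \<notin> g z"
    using sample_eq_if_cut_off_in_sample[OF z S s0 v _ IH] by blast
  have vN: "v \<in> voters n" "v \<notin> S"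
    using v cut_off_disjoint[OF v] unfolding cut_off_def by auto
  have c1N: "c1 \<in> voters n"
    using c1 sample_voters[OF z] by blast
  define p where "p = override_on z (\<lambda>u. if u \<in> S then c1 else v) (g z)"
  have p: "p \<in> profiles n"
    unfolding p_def using z sample_voters[OF z] c1 c1N vN v_notin
    by (intro profiles_override_on) auto
  have gp: "g p = g z"
    by (rule sample_determined_outside[OF z p]) (simp add: p_def)
  have "W_set n (g p) p = {v}"
    using gp c1 vN v_notin unfolding W_set_def p_def by auto
  define q where "q = p(v := s0)"
  have q: "q \<in> profiles n"
    unfolding q_def using p vN s0 S by (intro profiles_update) auto
  have "v \<in> W_set n (g q) q"
    unfolding q_def using p \<open>W_set n (g p) p = {v}\<close> s0 S vN
    by (intro unique_candidate_stays_candidate) auto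
  have reach: "reaches q S u" if "u \<in> insert v (g z)" for u
    using that s0 by (intro reaches_through[of q v S "g z"]) (auto simp: q_def p_def)
  have "card (cut_off n q S) < card (cut_off n z S)"
    by (rule card_cut_off_less[of "insert v (g z)"]) (use reach v in \<open>auto simp: q_def p_def\<close>)
  then have "g q = S"
    using q IH by blast
  then obtain u where u: "u \<in> S" "q u = v"
    using \<open>v \<in> W_set n (g q) q\<close> unfolding W_set_def by blast
  then have "p u = v"
    using vN by (auto simp: q_def split: if_splits)
  show False
  proof (cases "u \<in> g z")
    case True
    then show False
      using \<open>p u = v\<close> u(1) c1(1) v_notin by (simp add: p_def)
  next
    case False
    then show False
      using \<open>p u = v\<close> u(1) unnominated by (simp add: p_def)
  qed
qed

lemma sample_eq_if_cut_off_nonempty: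
  assumes z: "z \<in> profiles n" and S: "S \<subseteq> voters n" and s0: "s0 \<in> S"
    and cut: "cut_off n z S \<noteq> {}"
    and IH: "\<And>y. y \<in> profiles n \<Longrightarrow> card (cut_off n y S) < card (cut_off n z S) \<Longrightarrow> g y = S"
  shows "g z = S"
proof -
  obtain v where v: "v \<in> cut_off n z S"
    using cut by blast
  have vN: "v \<in> voters n" "v \<notin> S"
    using v cut_off_disjoint[OF v] unfolding cut_off_def by auto
  have zv: "z v \<in> voters n" "z v \<noteq> v"
    using profilesD[OF z vN(1)] by auto
  have zv_cut: "z v \<in> cut_off n z S"
    using z v by (rule cut_off_closed)
  define x where "x = z(v := s0)"
  have x: "x \<in> profiles n"
    unfolding x_def using z vN(1) by (rule profiles_update) (use S s0 vN in auto)
  have "card (cut_off n x S) < card (cut_off n z S)"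
    by (rule card_cut_off_less[of "{v}"]) (use v s0 in \<open>auto simp: x_def reaches_update\<close>)
  then have gx: "g x = S"
    by (rule IH[OF x])
  define y where "y s = (funnel S s v x)(v := z v)" for s
  have y: "y s \<in> profiles n" if "s \<in> S" for s
    using funnel_revote(1)[OF x gx vN zv that] unfolding y_def .
  have y_outside: "y s u = z u" if "u \<notin> S" for s u
    using that by (simp add: y_def x_def)
  have sub: "g (y s) \<subseteq> S" if s: "s \<in> S" for s
  proof (rule sample_subset_if_cut_off_unnominated[OF y[OF s] S s0])
    have cut_eq: "cut_off n (y s) S = cut_off n z S"
      using y_outside by (rule cut_off_eq)
    then show "z v \<in> cut_off n (y s) S"
      using zv_cut by simp
    show "y s w \<noteq> z v" if "w \<in> S - g (y s)" for w
      using that funnel_inside[OF _ s, of w v x] cut_off_disjoint[OF zv_cut] zv(2) vN(2)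
      by (auto simp: y_def)
    show "g y' = S" if "y' \<in> profiles n" "card (cut_off n y' S) < card (cut_off n (y s) S)" for y'
      using that IH cut_eq by simp
  qed
  have "S \<subseteq> g (y s0)"
    unfolding y_def using sub funnel_nominator[of S _ v x] vN(2)
    by (intro funnel_revote_cover[OF x gx vN zv s0]) (fastforce simp: y_def)
  then have gy: "g (y s0) = S"
    using sub[OF s0] by blast
  moreover have "g z = g (y s0)"
    by (rule sample_determined_outside[OF y[OF s0] z]) (use gy y_outside in simp)
  ultimately show ?thesis by simp
qed

lemma sample_constant:
  assumes y0: "y0 \<in> profiles n" and reach0: "\<And>v. v \<in> voters n \<Longrightarrow> reaches y0 (g y0) v"
    and z: "z \<in> profiles n"
  shows "g z = g y0"
proof -
  define S where "S = g y0"
  have S: "S \<subseteq> voters n"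
    unfolding S_def using y0 by (rule sample_voters)
  obtain s0 where s0: "s0 \<in> S"
    using sample_nonempty[OF y0] unfolding S_def by blast
  let ?redirect = "\<lambda>x. override_on x (\<lambda>_. s0) (voters n - S)"
  have redirect: "?redirect x \<in> profiles n" if "x \<in> profiles n" for x
    using that s0 S by (intro profiles_override_on) auto
  have canonical: "g (?redirect y0) = S"
    using sample_redirect_iff[OF y0 S s0] reach0 by (simp add: S_def)
  have "g z = S"
    using z
  proof (induction "card (cut_off n z S)" arbitrary: z rule: less_induct)
    case less
    show ?case
    proof (cases "cut_off n z S = {}")
      case True
      then have reach: "\<And>v. v \<in> voters n \<Longrightarrow> reaches z S v"
        unfolding cut_off_def by blast
      have "g (?redirect z) = g (?redirect y0)"
        by (rule sample_determined_outside[OF redirect[OF y0] redirect[OF less.prems]])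
          (use canonical profiles_undefined[OF y0] profiles_undefined[OF less.prems]
            in \<open>auto simp: override_on_def\<close>)
      then show ?thesis
        using sample_redirect_iff[OF less.prems S s0 reach] canonical by simp
    next
      case False
      then show ?thesis
        using sample_eq_if_cut_off_nonempty[OF less.prems S s0] less.hyps by blast
    qed
  qed
  then show ?thesis
    by (simp add: S_def)
qed

end

theorem mainTheorem3:
  fixes n :: nat
    and g :: "(nat \<Rightarrow> nat) \<Rightarrow> nat set"
    and f :: "(nat \<Rightarrow> nat) \<Rightarrow> nat option pmf"
  assumes "sample_mechanism n g f"
    and "strong_sample n g"
    and "impartial n f"
  shows "\<exists>S. \<forall>x\<in>profiles n. g x = S"
proof -
  interpret impartial_strong_sample_mechanism n g f
    using assms by unfold_locales
  show ?thesis
  proof (cases "2 \<le> n")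
    case True
    then have rotation: "rotation n \<in> profiles n"
      by (rule rotation_profile)
    obtain s where s: "s \<in> g (rotation n)"
      using sample_nonempty[OF rotation] by blast
    have "reaches (rotation n) (g (rotation n)) v" if "v \<in> voters n" for v
      using funpow_rotation_hits[OF that] s sample_voters[OF rotation] unfolding reaches_def by (metis subsetD)
    then show ?thesis
      using sample_constant[OF rotation] by blast
  next
    case False
    then show ?thesis
      using profiles_trivial by (metis not_le)
  qed
qed

end
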